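(* Let $q\ge2$ and let $f\colon\mathbb{N}_0\to\mathbb{U}$ be strongly $q$-multiplicative. Then either there exists an integer $0\le p<q-1$ such that $f(n)=e(np/(q-1))$ for all $n\in\mathbb{N}_0$, or $f$ is of Gelfond type of order $1$, i.e. there exists $\gamma<1$ such that $$\sup_{\alpha\in\mathbb{R}}\Big|\sum_{n=0}^{N-1}f(n)e(\alpha n)\Big|\ll N^{\gamma}\qquad(N\ge1).$$
   Context: $\mathbb{N}_0=\{0,1,\dots\}$, $\mathbb{U}=\{z\in\mathbb{C}:|z|=1\}$, $e(t)=e^{2\pi i t}$. $f$ is $q$-multiplicative if $f(m+n)=f(m)f(n)$ whenever $t,m,n\ge0$, $m<q^t$, $q^t\mid n$; it is strongly $q$-multiplicative if moreover $f(qn)=f(n)$ for all $n\in\mathbb{N}_0$. $X\ll Y$ means $|X|\le CY$ with $C$ independent of $N$. *)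

theory Defs
  imports Complex_Main
begin

definition e :: "real \<Rightarrow> complex" where
  "e t = exp (2 * of_real pi * \<i> * of_real t)"

definition q_multiplicative :: "nat \<Rightarrow> (nat \<Rightarrow> complex) \<Rightarrow> bool" where
  "q_multiplicative q f \<longleftrightarrow>
     (\<forall>t m n. m < q ^ t \<and> q ^ t dvd n \<longrightarrow> f (m + n) = f m * f n)"

definition strongly_q_multiplicative :: "nat \<Rightarrow> (nat \<Rightarrow> complex) \<Rightarrow> bool" where
  "strongly_q_multiplicative q f \<longleftrightarrow>
     q_multiplicative q f \<and> (\<forall>n. f (q * n) = f n)"

definition gelfond_type_order1 :: "(nat \<Rightarrow> complex) \<Rightarrow> bool" where
  "gelfond_type_order1 f \<longleftrightarrow>
     (\<exists>\<gamma>::real. \<gamma> < 1 \<and> (\<exists>C::real. \<forall>N::nat. N \<ge> 1 \<longrightarrow>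
        (\<forall>\<alpha>::real. norm (\<Sum>n<N. f n * e (\<alpha> * real n)) \<le> C * real N powr \<gamma>)))"

end

theory Submission
  imports Defs "HOL-Analysis.Complex_Transcendental"
begin

text \<open>
  Write U(N, a) for the sum of f(n) e(a n) over n < N, and S(b) = U(q, b). Strong
  q-multiplicativity gives U(q M, a) = S(a) U(M, q a), hence
  |U(q^2 M, a)| = H(a) |U(M, q^2 a)| with the continuous 1-periodic function
  H(b) = |S(b)| |S(q b)| bounded by q^2. If max H < q^2, iterating this identity gives
  |U(N, a)| << N^g with g = log_{q^2} max(max H, q) < 1. Otherwise |S(b)| = |S(q b)| = q at a
  maximum point b, so in both sums all terms are equal: f(d) = e(-b d) for d < q, and
  f(1) = e(-q b). Hence (q - 1) b is an integer, and multiplicativity over the digits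
  propagates f(n) = e(-b n) to all n.
\<close>

lemma e_add: "e (a + b) = e a * e b"
  unfolding e_def by (simp add: distrib_left exp_add[symmetric])

lemma norm_e [simp]: "norm (e t) = 1"
  unfolding e_def by (simp add: norm_exp_eq_Re)

lemma e_nonzero [simp]: "e t \<noteq> 0"
  by (metis norm_e norm_zero zero_neq_one)

lemma e_zero [simp]: "e 0 = 1"
  by (simp add: e_def)

lemma e_of_int [simp]: "e (of_int k) = 1"
proof -
  have "2 * of_real pi * \<i> * of_real (of_int k) = \<i> * (of_int k * (of_real pi * 2))"
    by simp
  then show ?thesis unfolding e_def by (metis exp_2pi_1_int)
qed

lemma e_add_Ints: "k \<in> \<int> \<Longrightarrow> e (t + k) = e t"
  by (erule Ints_cases) (simp add: e_add)

lemma mult_e_eq_1_iff: "z * e t = 1 \<longleftrightarrow> z = e (- t)"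
proof -
  have "e (- t) * e t = 1"
    by (simp flip: e_add)
  then show ?thesis
    by (metis e_nonzero mult_right_cancel)
qed

lemma e_add_of_int [simp]: "e (t + of_int k) = e t"
  by (simp add: e_add_Ints)

lemma e_eq_1_iff: "e t = 1 \<longleftrightarrow> t \<in> \<int>"
proof
  assume "e t = 1"
  then obtain n :: int where "Im (2 * of_real pi * \<i> * of_real t) = of_int (2 * n) * pi"
    unfolding e_def by (auto simp: exp_eq_1)
  then have "t = of_int n" using pi_gt_zero by (simp add: field_simps)
  then show "t \<in> \<int>" by simp
qed (auto elim: Ints_cases)

lemma continuous_on_e [continuous_intros]:
  "continuous_on A g \<Longrightarrow> continuous_on A (\<lambda>x. e (g x))"
  unfolding e_def by (intro continuous_intros)

lemma e_int_multiple_eq_root_of_unity: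
  fixes m :: nat
  assumes "m > 0" and "\<beta> * real m \<in> \<int>"
  shows "\<exists>p<m. \<forall>n. e (- (\<beta> * real n)) = e (real n * real p / real m)"
proof -
  from assms(2) obtain k where k: "\<beta> * real m = of_int k" by (auto elim: Ints_cases)
  define p where "p = nat ((- k) mod int m)"
  have p: "int p = (- k) mod int m" "p < m"
    using assms(1) by (auto simp: p_def nat_less_iff)
  obtain j where j: "- k = int m * j + int p"
    using div_mult_mod_eq[of "- k" "int m"] p(1) by (metis mult.commute)
  have "real n * real p / real m + \<beta> * real n = of_int (int n * (- j))" for n
  proof -
    have "real n * real p / real m + \<beta> * real n = real n * (real p + \<beta> * real m) / real m"
      using assms(1) by (simp add: field_simps)
    also have "real p + \<beta> * real m = - (real m * of_int j)"
      using arg_cong[OF j, of real_of_int] k by simp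
    finally show ?thesis using assms(1) by simp
  qed
  then have "e (real n * real p / real m) * e (\<beta> * real n) = 1" for n
    by (metis e_add e_of_int)
  then show ?thesis
    using p(2) by (auto simp: mult_e_eq_1_iff)
qed

definition exp_sum :: "(nat \<Rightarrow> complex) \<Rightarrow> nat \<Rightarrow> real \<Rightarrow> complex" where
  "exp_sum f N \<alpha> = (\<Sum>n<N. f n * e (\<alpha> * real n))"

lemma exp_sum_add:
  "exp_sum f (M + N) \<alpha> = exp_sum f M \<alpha> + (\<Sum>d<N. f (M + d) * e (\<alpha> * real (M + d)))"
  unfolding exp_sum_def by (induction N) (auto simp: add.assoc)

lemma norm_exp_sum_add_le:
  assumes "\<And>n. norm (f n) \<le> 1"
  shows "norm (exp_sum f (M + N) \<alpha>) \<le> norm (exp_sum f M \<alpha>) + N"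
proof -
  have "norm (\<Sum>d<N. f (M + d) * e (\<alpha> * real (M + d))) \<le> (\<Sum>d<N. norm (f (M + d)))"
    by (rule order_trans[OF norm_sum]) (simp add: norm_mult)
  also have "\<dots> \<le> N"
    using sum_bounded_above[of "{..<N}" "\<lambda>d. norm (f (M + d))" 1] assms by simp
  finally show ?thesis
    unfolding exp_sum_add by (rule order_trans[OF norm_triangle_ineq add_left_mono])
qed

lemma norm_exp_sum_le:
  assumes "\<And>n. norm (f n) \<le> 1"
  shows "norm (exp_sum f N \<alpha>) \<le> N"
  using norm_exp_sum_add_le[OF assms, where M = 0] by (simp add: exp_sum_def)

lemma exp_sum_add_of_int: "exp_sum f N (\<alpha> + of_int k) = exp_sum f N \<alpha>"
proof -
  have "(\<alpha> + of_int k) * real n = \<alpha> * real n + of_int (k * int n)" for n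
    by (simp add: algebra_simps)
  then show ?thesis unfolding exp_sum_def by (simp only: e_add_of_int)
qed

lemma continuous_on_exp_sum [continuous_intros]:
  "continuous_on A g \<Longrightarrow> continuous_on A (\<lambda>x. exp_sum f N (g x))"
  unfolding exp_sum_def by (intro continuous_intros)

lemma exp_sum_mult:
  assumes "\<And>d m. d < q \<Longrightarrow> f (d + q * m) = f d * f m"
  shows "exp_sum f (q * M) \<alpha> = exp_sum f q \<alpha> * exp_sum f M (q * \<alpha>)"
proof (induction M)
  case 0
  then show ?case by (simp add: exp_sum_def)
next
  case (Suc M)
  have "f (q * M + d) * e (\<alpha> * real (q * M + d))
      = (f d * e (\<alpha> * real d)) * (f M * e (q * \<alpha> * real M))" if "d < q" for d
  proof -
    have "e (\<alpha> * real (q * M + d)) = e (\<alpha> * real d) * e (q * \<alpha> * real M)"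
      by (simp add: e_add[symmetric] algebra_simps)
    then show ?thesis using assms[OF that, of M] by (simp add: add.commute)
  qed
  then have "(\<Sum>d<q. f (q * M + d) * e (\<alpha> * real (q * M + d)))
      = exp_sum f q \<alpha> * (f M * e (q * \<alpha> * real M))"
    unfolding exp_sum_def by (simp add: sum_distrib_right)
  then show ?case
    using exp_sum_add[of f "q * M" q \<alpha>] Suc by (simp add: exp_sum_def distrib_left add.commute)
qed

lemma exp_sum_powr_bound:
  fixes b :: nat and R :: real
  assumes b: "b \<ge> 2" and R: "R > 1"
    and unit: "\<And>n. norm (f n) \<le> 1"
    and block: "\<And>M \<alpha>. \<exists>\<alpha>'. norm (exp_sum f (b * M) \<alpha>) \<le> R * norm (exp_sum f M \<alpha>')"
  shows "\<exists>C. \<forall>N \<ge> 1. \<forall>\<alpha>. norm (exp_sum f N \<alpha>) \<le> C * real N powr log b R"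
proof -
  define \<gamma> where "\<gamma> = log b R"
  define L where "L = b / (R - 1)"
  define K where "K = b + L"
  have "\<gamma> \<ge> 0" and b_powr: "real b powr \<gamma> = R"
    using b R by (simp_all add: \<gamma>_def)
  have "L \<ge> 0" and "K \<ge> 0" and RL: "(R - 1) * L = b"
    using R by (simp_all add: L_def K_def)
  \<comment> \<open>The offset L absorbs the incomplete final block in the induction.\<close>
  have "norm (exp_sum f N \<alpha>) \<le> K * real N powr \<gamma> - L" if "N \<ge> 1" for N \<alpha>
    using that
  proof (induction N arbitrary: \<alpha> rule: less_induct)
    case (less N)
    have "1 \<le> real N powr \<gamma>"
      using less.prems \<open>\<gamma> \<ge> 0\<close> by (simp add: ge_one_powr_ge_zero)
    then have K_le: "K \<le> K * real N powr \<gamma>"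
      using \<open>L \<ge> 0\<close> mult_left_mono[of 1 "real N powr \<gamma>" K] by (simp add: K_def)
    show ?case
    proof (cases "N < b")
      case True
      then show ?thesis
        using norm_exp_sum_le[where f = f, OF unit, where N = N and \<alpha> = \<alpha>] K_le by (simp add: K_def)
    next
      case False
      define M where "M = N div b"
      define r where "r = N mod b"
      have N: "N = b * M + r" and "r < b" "M \<ge> 1" "M < N"
        using b False less.prems by (auto simp: M_def r_def div_greater_zero_iff Suc_le_eq)
      obtain \<alpha>' where \<alpha>': "norm (exp_sum f (b * M) \<alpha>) \<le> R * norm (exp_sum f M \<alpha>')"
        using block by blast
      have "R * real M powr \<gamma> = (real b * real M) powr \<gamma>"
        using b_powr by (simp add: powr_mult)
      also have "\<dots> \<le> real N powr \<gamma>"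
        using N \<open>\<gamma> \<ge> 0\<close> by (intro powr_mono2) auto
      finally have M_N: "R * real M powr \<gamma> \<le> real N powr \<gamma>" .
      have "norm (exp_sum f N \<alpha>) \<le> R * norm (exp_sum f M \<alpha>') + r"
        using norm_exp_sum_add_le[where f = f, OF unit, where M = "b * M" and N = r and \<alpha> = \<alpha>] \<alpha>' N by simp
      also have "\<dots> \<le> R * (K * real M powr \<gamma> - L) + r"
        using less.IH[OF \<open>M < N\<close> \<open>M \<ge> 1\<close>] R by simp
      also have "\<dots> = K * (R * real M powr \<gamma>) - L - (R - 1) * L + r"
        by (simp add: algebra_simps)
      also have "\<dots> \<le> K * real N powr \<gamma> - L"
        using mult_left_mono[OF M_N \<open>K \<ge> 0\<close>] RL \<open>r < b\<close> by linarith
      finally show ?thesis .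
    qed
  qed
  then have "\<forall>N \<ge> 1. \<forall>\<alpha>. norm (exp_sum f N \<alpha>) \<le> K * real N powr \<gamma>"
    using \<open>L \<ge> 0\<close> by (smt (verit))
  then show ?thesis
    unfolding \<gamma>_def by blast
qed

lemma periodic_of_int:
  assumes "\<And>x. h (x + 1) = h (x :: real)"
  shows "h (x + of_int k) = h x"
proof -
  have nat: "h (y + of_nat n) = h y" for y n
  proof (induction n)
    case (Suc n)
    have "y + of_nat (Suc n) = (y + of_nat n) + 1" by simp
    then show ?case by (simp only: assms Suc)
  qed simp
  show ?thesis
  proof (cases "k \<ge> 0")
    case True
    then show ?thesis using nat[of x "nat k"] by simp
  next
    case False
    then show ?thesis using nat[of "x + of_int k" "nat (- k)"] by simp
  qed
qed

lemma continuous_periodic_attains_max: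
  fixes h :: "real \<Rightarrow> real"
  assumes "continuous_on UNIV h" and "\<And>x. h (x + 1) = h x"
  shows "\<exists>x\<^sub>0. \<forall>x. h x \<le> h x\<^sub>0"
proof -
  have "continuous_on {0..1} h"
    using assms(1) by (rule continuous_on_subset) simp
  then obtain x\<^sub>0 where max: "\<And>y. y \<in> {0..1} \<Longrightarrow> h y \<le> h x\<^sub>0"
    using continuous_attains_sup[of "{0..1}" h] by (metis atLeastAtMost_iff compact_Icc empty_iff zero_le_one)
  have "h x \<le> h x\<^sub>0" for x
  proof -
    have "h x = h (frac x)"
      using periodic_of_int[where h = h, OF assms(2), of "frac x" "\<lfloor>x\<rfloor>"] by (simp add: frac_def)
    also have "\<dots> \<le> h x\<^sub>0"
      using frac_lt_1[of x] frac_ge_0[of x] by (intro max) auto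
    finally show ?thesis .
  qed
  then show ?thesis by blast
qed

lemma complex_norm_1_Re_1:
  fixes u :: complex
  assumes "norm u = 1" and "Re u = 1"
  shows "u = 1"
proof -
  have "(Re u)\<^sup>2 + (Im u)\<^sup>2 = 1" using assms(1) by (simp add: cmod_def)
  then show ?thesis using assms(2) by (simp add: complex_eq_iff)
qed

lemma norm_sum_eq_card_imp_eq:
  fixes z :: "'a \<Rightarrow> complex"
  assumes "finite A" and unit: "\<And>a. a \<in> A \<Longrightarrow> norm (z a) = 1"
    and sum: "norm (sum z A) = card A" and "a \<in> A" "b \<in> A"
  shows "z a = z b"
proof -
  define w where "w = sum z A / of_nat (card A)"
  have "card A > 0" using assms(1,4) card_gt_0_iff by blast
  then have "norm w = 1" using sum by (simp add: w_def norm_divide)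
  \<comment> \<open>Each term has real part at most 1 along the direction w, and these real parts sum to card A.\<close>
  have le: "Re (z x * cnj w) \<le> 1" if "x \<in> A" for x
    using complex_Re_le_cmod[of "z x * cnj w"] unit[OF that] \<open>norm w = 1\<close> by (simp add: norm_mult)
  have "(\<Sum>x\<in>A. Re (z x * cnj w)) = Re (sum z A * cnj w)"
    by (simp add: sum_distrib_right Re_sum)
  also have "sum z A * cnj w = of_real ((norm (sum z A))\<^sup>2 / card A)"
    unfolding w_def using complex_norm_square[of "sum z A"] by (simp add: complex_cnj_divide)
  also have "Re \<dots> = card A"
    using sum \<open>card A > 0\<close> by (simp add: power2_eq_square)
  finally have "(\<Sum>x\<in>A. 1 - Re (z x * cnj w)) = 0"
    by (simp add: sum_subtractf)
  moreover have "\<forall>x\<in>A. 0 \<le> 1 - Re (z x * cnj w)"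
    using le by simp
  ultimately have "\<forall>x\<in>A. 1 - Re (z x * cnj w) = 0"
    by (simp add: sum_nonneg_eq_0_iff[OF assms(1)])
  then have re: "Re (z x * cnj w) = 1" if "x \<in> A" for x
    using that by simp
  have "z x = w" if "x \<in> A" for x
  proof -
    have "norm (z x * cnj w) = 1" using unit[OF that] \<open>norm w = 1\<close> by (simp add: norm_mult)
    then have "z x * cnj w = 1"
      using re[OF that] by (rule complex_norm_1_Re_1)
    then have "z x * (cnj w * w) = w" by (simp add: mult.assoc)
    moreover have "cnj w * w = 1"
      using \<open>norm w = 1\<close> complex_norm_square[of w] by (simp add: mult.commute)
    ultimately show ?thesis by simp
  qed
  then show ?thesis using assms(4,5) by simp
qed

lemma q_multiplicative_0:
  assumes "q_multiplicative q f" and "f 0 \<noteq> 0"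
  shows "f 0 = 1"
proof -
  have "f 0 = f 0 * f 0"
    using assms(1) unfolding q_multiplicative_def by (metis add_0 dvd_0_right less_one power_0)
  then show ?thesis using assms(2) by simp
qed

lemma strongly_q_multiplicative_digit:
  assumes "strongly_q_multiplicative q f" and "d < q"
  shows "f (d + q * m) = f d * f m"
  using assms unfolding strongly_q_multiplicative_def q_multiplicative_def
  by (metis dvd_triv_left power_one_right)

lemma norm_exp_sum_eq_card_imp:
  assumes unit: "\<And>n. norm (f n) = 1" and "f 0 = 1"
    and "norm (exp_sum f q \<beta>) = q" and "d < q"
  shows "f d = e (- (\<beta> * real d))"
proof -
  have "f d * e (\<beta> * real d) = f 0 * e (\<beta> * real 0)"
    using assms by (intro norm_sum_eq_card_imp_eq[of "{..<q}"]) (auto simp: exp_sum_def norm_mult)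
  then show ?thesis using \<open>f 0 = 1\<close> by (simp add: mult_e_eq_1_iff)
qed

lemma strongly_q_multiplicative_eq_e:
  assumes f: "strongly_q_multiplicative q f" and q: "q \<ge> 2"
    and digits: "\<And>d. d < q \<Longrightarrow> f d = e (- (\<beta> * real d))"
    and period: "\<beta> * real (q - 1) \<in> \<int>"
  shows "f n = e (- (\<beta> * real n))"
proof (induction n rule: less_induct)
  case (less n)
  show ?case
  proof (cases "n < q")
    case True
    then show ?thesis by (rule digits)
  next
    case False
    define d m where "d = n mod q" and "m = n div q"
    have n: "n = d + q * m" and "d < q" and "m < n"
      using q False by (auto simp: d_def m_def)
    have split: "- (\<beta> * real n) = (- (\<beta> * real d) + - (\<beta> * real m)) + - (\<beta> * real (q - 1) * real m)"
      using q by (simp add: n of_nat_diff algebra_simps)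
    have "- (\<beta> * real (q - 1) * real m) \<in> \<int>"
      using Ints_minus[OF Ints_mult[OF period Ints_of_nat]] by simp
    then have "e (- (\<beta> * real n)) = e (- (\<beta> * real d) + - (\<beta> * real m))"
      unfolding split by (rule e_add_Ints)
    also have "\<dots> = e (- (\<beta> * real d)) * e (- (\<beta> * real m))"
      by (rule e_add)
    finally show ?thesis
      using strongly_q_multiplicative_digit[OF f \<open>d < q\<close>, of m] digits[OF \<open>d < q\<close>] less.IH[OF \<open>m < n\<close>]
      by (simp add: n)
  qed
qed

lemma strongly_q_multiplicative_character:
  assumes q: "q \<ge> 2" and unit: "\<And>n. norm (f n) = 1" and f: "strongly_q_multiplicative q f"
    and max: "norm (exp_sum f q \<beta>) = q" "norm (exp_sum f q (q * \<beta>)) = q"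
  shows "\<exists>p<q - 1. \<forall>n. f n = e (real n * real p / real (q - 1))"
proof -
  have "f 0 = 1"
    using f unit[of 0] by (intro q_multiplicative_0) (auto simp: strongly_q_multiplicative_def)
  note digit = norm_exp_sum_eq_card_imp[where f = f, OF unit this]
  have "e (- \<beta>) = e (- (q * \<beta>))"
    using digit[OF max(1), of 1] digit[OF max(2), of 1] q by simp
  then have "e (- \<beta>) * e (q * \<beta>) = 1"
    by (simp add: mult_e_eq_1_iff)
  moreover have "\<beta> * real (q - 1) = - \<beta> + q * \<beta>"
    using q by (simp add: of_nat_diff algebra_simps)
  ultimately have "e (\<beta> * real (q - 1)) = 1"
    by (simp only: e_add)
  then have period: "\<beta> * real (q - 1) \<in> \<int>"
    by (simp add: e_eq_1_iff)
  have "f n = e (- (\<beta> * real n))" for n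
    using strongly_q_multiplicative_eq_e[OF f q digit[OF max(1)] period] .
  then show ?thesis
    using e_int_multiple_eq_root_of_unity[OF _ period] q by auto
qed

lemma mult_ge_square_imp_eq:
  fixes a b c :: real
  assumes "0 \<le> a" "a \<le> c" "0 \<le> b" "b \<le> c" and "c * c \<le> a * b" and "c > 0"
  shows "a = c" and "b = c"
proof -
  have "a * b \<le> a * c" "a * c \<le> c * c" "a * b \<le> c * b" "c * b \<le> c * c"
    using assms by (simp_all add: mult_left_mono mult_right_mono)
  then have "a * c = c * c" and "c * b = c * c"
    using assms(5) by linarith+
  then show "a = c" and "b = c"
    using \<open>c > 0\<close> by simp_all
qed

text \<open>
  Two digits are needed: for f(n) = e(b s(n)) with s the base-q digit sum, |S| attains q
  at -b, yet f is of Gelfond type unless (q - 1) b is an integer.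
\<close>

definition two_digit_norm :: "nat \<Rightarrow> (nat \<Rightarrow> complex) \<Rightarrow> real \<Rightarrow> real" where
  "two_digit_norm q f \<beta> = norm (exp_sum f q \<beta>) * norm (exp_sum f q (q * \<beta>))"

lemma norm_exp_sum_square_mult:
  assumes "strongly_q_multiplicative q f"
  shows "norm (exp_sum f (q\<^sup>2 * M) \<alpha>) = two_digit_norm q f \<alpha> * norm (exp_sum f M (q\<^sup>2 * \<alpha>))"
  using exp_sum_mult[OF strongly_q_multiplicative_digit[OF assms]]
  by (simp add: two_digit_norm_def power2_eq_square norm_mult mult.assoc)

lemma two_digit_norm_attains_max: "\<exists>\<beta>\<^sub>0. \<forall>\<beta>. two_digit_norm q f \<beta> \<le> two_digit_norm q f \<beta>\<^sub>0"
proof (rule continuous_periodic_attains_max)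
  show "continuous_on UNIV (two_digit_norm q f)"
    unfolding two_digit_norm_def by (intro continuous_intros)
  show "two_digit_norm q f (\<beta> + 1) = two_digit_norm q f \<beta>" for \<beta>
    using exp_sum_add_of_int[of f q \<beta> 1] exp_sum_add_of_int[of f q "q * \<beta>" q]
    by (simp add: two_digit_norm_def algebra_simps)
qed

lemma two_digit_norm_ge_square_imp:
  assumes "\<And>n. norm (f n) \<le> 1" and "q > 0" and "two_digit_norm q f \<beta> \<ge> q\<^sup>2"
  shows "norm (exp_sum f q \<beta>) = q" and "norm (exp_sum f q (q * \<beta>)) = q"
proof -
  have "norm (exp_sum f q \<beta>) \<le> q" and "norm (exp_sum f q (q * \<beta>)) \<le> q"
    using norm_exp_sum_le[where f = f, OF assms(1)] by auto
  then show "norm (exp_sum f q \<beta>) = q" and "norm (exp_sum f q (q * \<beta>)) = q"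
    using mult_ge_square_imp_eq[of "norm (exp_sum f q \<beta>)" q "norm (exp_sum f q (q * \<beta>))"] assms(2,3)
    by (simp_all add: two_digit_norm_def power2_eq_square)
qed

lemma gelfond_type_order1_if_contracting:
  fixes b :: nat and R :: real
  assumes "b \<ge> 2" and "1 < R" and "R < b"
    and "\<And>n. norm (f n) \<le> 1"
    and "\<And>M \<alpha>. \<exists>\<alpha>'. norm (exp_sum f (b * M) \<alpha>) \<le> R * norm (exp_sum f M \<alpha>')"
  shows "gelfond_type_order1 f"
proof -
  obtain C where "\<forall>N \<ge> 1. \<forall>\<alpha>. norm (exp_sum f N \<alpha>) \<le> C * real N powr log b R"
    using exp_sum_powr_bound[of b R f] assms by blast
  moreover have "log b R < 1"
    using assms(1-3) by simp
  ultimately show ?thesis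
    unfolding gelfond_type_order1_def exp_sum_def by blast
qed

lemma gelfond_type_order1_if_two_digit_norm_lt:
  assumes q: "q \<ge> 2" and unit: "\<And>n. norm (f n) \<le> 1" and f: "strongly_q_multiplicative q f"
    and bound: "\<And>\<beta>. two_digit_norm q f \<beta> \<le> H" and "H < q\<^sup>2"
  shows "gelfond_type_order1 f"
proof -
  define R where "R = max H q"
  have "real q < real (q\<^sup>2)"
    using q by (simp add: power2_eq_square)
  have "\<exists>\<alpha>'. norm (exp_sum f (q\<^sup>2 * M) \<alpha>) \<le> R * norm (exp_sum f M \<alpha>')" for M \<alpha>
  proof
    have "two_digit_norm q f \<alpha> \<le> R"
      using bound[of \<alpha>] by (simp add: R_def)
    then show "norm (exp_sum f (q\<^sup>2 * M) \<alpha>) \<le> R * norm (exp_sum f M (q\<^sup>2 * \<alpha>))"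
      unfolding norm_exp_sum_square_mult[OF f] using mult_right_mono by fastforce
  qed
  then show ?thesis
    using \<open>real q < real (q\<^sup>2)\<close> \<open>H < q\<^sup>2\<close> q
    by (intro gelfond_type_order1_if_contracting[where f = f and b = "q\<^sup>2" and R = R, OF _ _ _ unit])
      (auto simp: R_def)
qed

theorem proposition6p1:
  fixes q :: nat and f :: "nat \<Rightarrow> complex"
  assumes "q \<ge> 2"
    and "\<And>n. norm (f n) = 1"
    and "strongly_q_multiplicative q f"
  shows "(\<exists>p::nat. p < q - 1 \<and> (\<forall>n. f n = e (real n * real p / real (q - 1))))
         \<or> gelfond_type_order1 f"
proof -
  have unit: "\<And>n. norm (f n) \<le> 1"
    using assms(2) by simp
  obtain \<beta>\<^sub>0 where max: "\<And>\<beta>. two_digit_norm q f \<beta> \<le> two_digit_norm q f \<beta>\<^sub>0"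
    using two_digit_norm_attains_max by blast
  show ?thesis
  proof (cases "two_digit_norm q f \<beta>\<^sub>0 < q\<^sup>2")
    case True
    then have "gelfond_type_order1 f"
      using gelfond_type_order1_if_two_digit_norm_lt[OF assms(1) unit assms(3) max] by blast
    then show ?thesis ..
  next
    case False
    then show ?thesis
      using two_digit_norm_ge_square_imp[where f = f and q = q and \<beta> = \<beta>\<^sub>0, OF unit] assms
        strongly_q_multiplicative_character[OF assms] by simp
  qed
qed

end
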